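(* Let $\mathcal{C}$ be a category and $\mathcal{D}$ a cartesian closed category with internal hom $[-,-]$, and let $F,G,H:\mathcal{C}^{op}\times\mathcal{C}\to\mathcal{D}$ be functors. There is a bijection between dinatural transformations $F\times G\Rightarrow H$ (where $(F\times G)(x',x)=F(x',x)\times G(x',x)$) and dinatural transformations $G\Rightarrow E$, where $E:\mathcal{C}^{op}\times\mathcal{C}\to\mathcal{D}$ is $E(x',x):=[F(x,x'),H(x',x)]$.
   Context: For $F,G:\mathcal{C}^{op}\times\mathcal{C}\to\mathcal{D}$, a dinatural transformation is a family $\alpha_x:F(x,x)\to G(x,x)$ such that for every $f:a\to b$: $G(f,\mathrm{id}_b)\circ\alpha_b\circ F(\mathrm{id}_b,f)=G(\mathrm{id}_a,f)\circ\alpha_a\circ F(f,\mathrm{id}_a)$. *)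

theory Defs
  imports Main
begin

record ('o,'a) category =
  Ob :: "'o set"
  Ar :: "'a set"
  Dom :: "'a \<Rightarrow> 'o"
  Cod :: "'a \<Rightarrow> 'o"
  Idt :: "'o \<Rightarrow> 'a"
  Comp :: "'a \<Rightarrow> 'a \<Rightarrow> 'a"   (* Comp C g f = g \<circ> f *)

definition hom :: "('o,'a) category \<Rightarrow> 'o \<Rightarrow> 'o \<Rightarrow> 'a set" where
  "hom C x y = {f \<in> Ar C. Dom C f = x \<and> Cod C f = y}"

definition is_category :: "('o,'a) category \<Rightarrow> bool" where
  "is_category C \<longleftrightarrow>
     (\<forall>f\<in>Ar C. Dom C f \<in> Ob C \<and> Cod C f \<in> Ob C) \<and>
     (\<forall>x\<in>Ob C. Idt C x \<in> hom C x x) \<and>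
     (\<forall>f\<in>Ar C. \<forall>g\<in>Ar C. Cod C f = Dom C g \<longrightarrow>
          Comp C g f \<in> hom C (Dom C f) (Cod C g)) \<and>
     (\<forall>f\<in>Ar C. Comp C f (Idt C (Dom C f)) = f \<and> Comp C (Idt C (Cod C f)) f = f) \<and>
     (\<forall>f\<in>Ar C. \<forall>g\<in>Ar C. \<forall>h\<in>Ar C. Cod C f = Dom C g \<longrightarrow> Cod C g = Dom C h \<longrightarrow>
          Comp C h (Comp C g f) = Comp C (Comp C h g) f)"

text \<open>Object part BFo x' x = B(x',x); arrow part BFa f g = B(f,g) for
  f : a' \<rightarrow> b' (contravariant slot) and g : a \<rightarrow> b, a morphism B(b',a) \<rightarrow> B(a',b).\<close>

record ('o,'a,'p,'b) bifunctor =
  BFo :: "'o \<Rightarrow> 'o \<Rightarrow> 'p"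
  BFa :: "'a \<Rightarrow> 'a \<Rightarrow> 'b"

definition is_bifunctor ::
  "('o,'a) category \<Rightarrow> ('p,'b) category \<Rightarrow> ('o,'a,'p,'b) bifunctor \<Rightarrow> bool" where
  "is_bifunctor C D B \<longleftrightarrow>
     (\<forall>x'\<in>Ob C. \<forall>x\<in>Ob C. BFo B x' x \<in> Ob D) \<and>
     (\<forall>f\<in>Ar C. \<forall>g\<in>Ar C.
        BFa B f g \<in> hom D (BFo B (Cod C f) (Dom C g)) (BFo B (Dom C f) (Cod C g))) \<and>
     (\<forall>x'\<in>Ob C. \<forall>x\<in>Ob C. BFa B (Idt C x') (Idt C x) = Idt D (BFo B x' x)) \<and>
     (\<forall>f1\<in>Ar C. \<forall>f2\<in>Ar C. \<forall>g1\<in>Ar C. \<forall>g2\<in>Ar C.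
        Cod C f1 = Dom C f2 \<longrightarrow> Cod C g1 = Dom C g2 \<longrightarrow>
        BFa B (Comp C f2 f1) (Comp C g2 g1) = Comp D (BFa B f1 g2) (BFa B f2 g1))"

text \<open>prd x y = x \<times> y with projections pr1, pr2 and pairing; one = terminal object;
  ex y z = [y,z] with evaluation ev y z : [y,z] \<times> y \<rightarrow> z and currying
  lam x y z h : x \<rightarrow> [y,z] for h : x \<times> y \<rightarrow> z.\<close>

record ('p,'b) ccc_structure =
  prd :: "'p \<Rightarrow> 'p \<Rightarrow> 'p"
  pr1 :: "'p \<Rightarrow> 'p \<Rightarrow> 'b"
  pr2 :: "'p \<Rightarrow> 'p \<Rightarrow> 'b"
  pair :: "'b \<Rightarrow> 'b \<Rightarrow> 'b"
  one :: "'p"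
  bang :: "'p \<Rightarrow> 'b"
  ex :: "'p \<Rightarrow> 'p \<Rightarrow> 'p"
  ev :: "'p \<Rightarrow> 'p \<Rightarrow> 'b"
  lam :: "'p \<Rightarrow> 'p \<Rightarrow> 'p \<Rightarrow> 'b \<Rightarrow> 'b"

definition prod_arr :: "('p,'b) category \<Rightarrow> ('p,'b) ccc_structure \<Rightarrow> 'b \<Rightarrow> 'b \<Rightarrow> 'b" where
  "prod_arr D S f g =
     pair S (Comp D f (pr1 S (Dom D f) (Dom D g))) (Comp D g (pr2 S (Dom D f) (Dom D g)))"

definition is_ccc :: "('p,'b) category \<Rightarrow> ('p,'b) ccc_structure \<Rightarrow> bool" where
  "is_ccc D S \<longleftrightarrow>
     is_category D \<and>
     one S \<in> Ob D \<and>
     (\<forall>x\<in>Ob D. bang S x \<in> hom D x (one S) \<and> (\<forall>f\<in>hom D x (one S). f = bang S x)) \<and>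
     (\<forall>x\<in>Ob D. \<forall>y\<in>Ob D.
        prd S x y \<in> Ob D \<and> pr1 S x y \<in> hom D (prd S x y) x \<and> pr2 S x y \<in> hom D (prd S x y) y \<and>
        (\<forall>z\<in>Ob D. \<forall>f\<in>hom D z x. \<forall>g\<in>hom D z y.
           pair S f g \<in> hom D z (prd S x y) \<and>
           Comp D (pr1 S x y) (pair S f g) = f \<and> Comp D (pr2 S x y) (pair S f g) = g \<and>
           (\<forall>h\<in>hom D z (prd S x y). Comp D (pr1 S x y) h = f \<and> Comp D (pr2 S x y) h = g
               \<longrightarrow> h = pair S f g))) \<and>
     (\<forall>y\<in>Ob D. \<forall>z\<in>Ob D.
        ex S y z \<in> Ob D \<and> ev S y z \<in> hom D (prd S (ex S y z) y) z \<and>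
        (\<forall>x\<in>Ob D. \<forall>h\<in>hom D (prd S x y) z.
           lam S x y z h \<in> hom D x (ex S y z) \<and>
           Comp D (ev S y z) (prod_arr D S (lam S x y z h) (Idt D y)) = h \<and>
           (\<forall>k\<in>hom D x (ex S y z). Comp D (ev S y z) (prod_arr D S k (Idt D y)) = h
               \<longrightarrow> k = lam S x y z h)))"

text \<open>Internal hom on arrows: [f,g] : [y,z] \<rightarrow> [y',z'] for f : y' \<rightarrow> y, g : z \<rightarrow> z'.\<close>
definition exp_arr :: "('p,'b) category \<Rightarrow> ('p,'b) ccc_structure \<Rightarrow> 'b \<Rightarrow> 'b \<Rightarrow> 'b" where
  "exp_arr D S f g =
     lam S (ex S (Cod D f) (Dom D g)) (Dom D f) (Cod D g)
       (Comp D g (Comp D (ev S (Cod D f) (Dom D g))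
          (prod_arr D S (Idt D (ex S (Cod D f) (Dom D g))) f)))"

definition prod_bifun ::
  "('p,'b) category \<Rightarrow> ('p,'b) ccc_structure \<Rightarrow> ('o,'a,'p,'b) bifunctor \<Rightarrow>
   ('o,'a,'p,'b) bifunctor \<Rightarrow> ('o,'a,'p,'b) bifunctor" where
  "prod_bifun D S F G =
     \<lparr> BFo = (\<lambda>x' x. prd S (BFo F x' x) (BFo G x' x)),
       BFa = (\<lambda>f g. prod_arr D S (BFa F f g) (BFa G f g)) \<rparr>"

definition exp_bifun ::
  "('p,'b) category \<Rightarrow> ('p,'b) ccc_structure \<Rightarrow> ('o,'a,'p,'b) bifunctor \<Rightarrow>
   ('o,'a,'p,'b) bifunctor \<Rightarrow> ('o,'a,'p,'b) bifunctor" where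
  "exp_bifun D S F H =
     \<lparr> BFo = (\<lambda>x' x. ex S (BFo F x x') (BFo H x' x)),
       BFa = (\<lambda>f g. exp_arr D S (BFa F g f) (BFa H f g)) \<rparr>"

definition dinat ::
  "('o,'a) category \<Rightarrow> ('p,'b) category \<Rightarrow> ('o,'a,'p,'b) bifunctor \<Rightarrow>
   ('o,'a,'p,'b) bifunctor \<Rightarrow> ('o \<Rightarrow> 'b) set" where
  "dinat C D F G =
     {\<alpha>. (\<forall>x\<in>Ob C. \<alpha> x \<in> hom D (BFo F x x) (BFo G x x)) \<and>
         (\<forall>x. x \<notin> Ob C \<longrightarrow> \<alpha> x = undefined) \<and>
         (\<forall>f\<in>Ar C.
            Comp D (Comp D (BFa G f (Idt C (Cod C f))) (\<alpha> (Cod C f))) (BFa F (Idt C (Cod C f)) f)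
          = Comp D (Comp D (BFa G (Idt C (Dom C f)) f) (\<alpha> (Dom C f))) (BFa F f (Idt C (Dom C f))))}"

end

theory Submission
  imports Defs "HOL-Library.FuncSet"
begin

text \<open>For each object x, precomposing with the symmetry F(x,x) \<times> G(x,x) \<cong> G(x,x) \<times> F(x,x)
  and currying transposes maps F(x,x) \<times> G(x,x) \<rightarrow> H(x,x) bijectively into maps
  G(x,x) \<rightarrow> [F(x,x), H(x,x)]. This transposition is natural in all three variables: the transpose
  of v \<circ> h \<circ> (u \<times> g) is [u,v] \<circ> h' \<circ> g, where h' is the transpose of h. For f : a \<rightarrow> b,
  both sides of the dinaturality equation of \<alpha> at f have exactly this shape, with
  u = F(1,f), g = G(1,f), v = H(f,1) resp. u = F(f,1), g = G(f,1), v = H(1,f), and their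
  transposes are the two sides of the dinaturality equation of the transposed family. So
  componentwise transposition restricts to a bijection between the two sets of dinatural
  transformations.\<close>

locale ccc =
  fixes D :: "('p,'b) category" and S :: "('p,'b) ccc_structure"
  assumes ccc: "is_ccc D S"
begin

abbreviation comp_D (infixr "\<cdot>" 55) where "g \<cdot> f \<equiv> Comp D g f"
abbreviation prod_arr_D (infixr "\<otimes>" 70) where "f \<otimes> g \<equiv> prod_arr D S f g"

lemma category: "is_category D"
  using ccc by (simp add: is_ccc_def)

lemma hom_ob:
  assumes "f \<in> hom D x y" shows "x \<in> Ob D" "y \<in> Ob D"
  using category assms by (auto simp: is_category_def hom_def)

lemma comp_hom: "f \<in> hom D x y \<Longrightarrow> g \<in> hom D y z \<Longrightarrow> g \<cdot> f \<in> hom D x z"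
  using category by (auto simp: is_category_def hom_def)

lemma comp_assoc:
  "f \<in> hom D x y \<Longrightarrow> g \<in> hom D y z \<Longrightarrow> h \<in> hom D z w \<Longrightarrow> (h \<cdot> g) \<cdot> f = h \<cdot> g \<cdot> f"
  using category by (auto simp: is_category_def hom_def)

lemma id_hom: "x \<in> Ob D \<Longrightarrow> Idt D x \<in> hom D x x"
  using category by (simp add: is_category_def)

lemma comp_id_left: "f \<in> hom D x y \<Longrightarrow> Idt D y \<cdot> f = f"
  using category by (auto simp: is_category_def hom_def)

lemma comp_id_right: "f \<in> hom D x y \<Longrightarrow> f \<cdot> Idt D x = f"
  using category by (auto simp: is_category_def hom_def)

lemma comp_assoc_rewrite:
  assumes "Q \<in> hom D a b" "P \<in> hom D b c" "p \<in> hom D c d" and "p \<cdot> P = r"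
  shows "p \<cdot> P \<cdot> Q = r \<cdot> Q"
  using comp_assoc[OF assms(1-3)] assms(4) by simp

lemma comp_square_paste:
  assumes "Q \<in> hom D A B" "P \<in> hom D B C" "r \<in> hom D A a" "q \<in> hom D B b" "p \<in> hom D C c"
    and "f \<in> hom D a b" "f' \<in> hom D b c"
    and "q \<cdot> Q = f \<cdot> r" "p \<cdot> P = f' \<cdot> q"
  shows "p \<cdot> P \<cdot> Q = (f' \<cdot> f) \<cdot> r"
proof -
  have "p \<cdot> P \<cdot> Q = (f' \<cdot> q) \<cdot> Q" by (rule comp_assoc_rewrite) (use assms in auto)
  also have "\<dots> = f' \<cdot> f \<cdot> r" using comp_assoc[OF assms(1,4,7)] assms(8) by simp
  also have "\<dots> = (f' \<cdot> f) \<cdot> r" using comp_assoc[OF assms(3,6,7)] by simp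
  finally show ?thesis .
qed

lemma prd_universal:
  assumes "x \<in> Ob D" "y \<in> Ob D"
  shows "prd S x y \<in> Ob D \<and> pr1 S x y \<in> hom D (prd S x y) x \<and> pr2 S x y \<in> hom D (prd S x y) y \<and>
        (\<forall>z\<in>Ob D. \<forall>f\<in>hom D z x. \<forall>g\<in>hom D z y.
           pair S f g \<in> hom D z (prd S x y) \<and>
           pr1 S x y \<cdot> pair S f g = f \<and> pr2 S x y \<cdot> pair S f g = g \<and>
           (\<forall>h\<in>hom D z (prd S x y). pr1 S x y \<cdot> h = f \<and> pr2 S x y \<cdot> h = g \<longrightarrow> h = pair S f g))"
  using ccc assms by (simp add: is_ccc_def)

lemma prd_ob: "x \<in> Ob D \<Longrightarrow> y \<in> Ob D \<Longrightarrow> prd S x y \<in> Ob D"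
  using prd_universal by blast

lemma pr1_hom: "x \<in> Ob D \<Longrightarrow> y \<in> Ob D \<Longrightarrow> pr1 S x y \<in> hom D (prd S x y) x"
  using prd_universal by blast

lemma pr2_hom: "x \<in> Ob D \<Longrightarrow> y \<in> Ob D \<Longrightarrow> pr2 S x y \<in> hom D (prd S x y) y"
  using prd_universal by blast

lemma pair_hom: "f \<in> hom D z x \<Longrightarrow> g \<in> hom D z y \<Longrightarrow> pair S f g \<in> hom D z (prd S x y)"
  using prd_universal hom_ob[of f] hom_ob[of g] by blast

lemma pr1_pair: "f \<in> hom D z x \<Longrightarrow> g \<in> hom D z y \<Longrightarrow> pr1 S x y \<cdot> pair S f g = f"
  using prd_universal hom_ob[of f] hom_ob[of g] by blast

lemma pr2_pair: "f \<in> hom D z x \<Longrightarrow> g \<in> hom D z y \<Longrightarrow> pr2 S x y \<cdot> pair S f g = g"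
  using prd_universal hom_ob[of f] hom_ob[of g] by blast

lemma prd_hom_eqI:
  assumes "x \<in> Ob D" "y \<in> Ob D" "h \<in> hom D z (prd S x y)" "h' \<in> hom D z (prd S x y)"
    and "pr1 S x y \<cdot> h = pr1 S x y \<cdot> h'" "pr2 S x y \<cdot> h = pr2 S x y \<cdot> h'"
  shows "h = h'"
proof -
  have "pr1 S x y \<cdot> h' \<in> hom D z x" "pr2 S x y \<cdot> h' \<in> hom D z y"
    using assms comp_hom pr1_hom pr2_hom by blast+
  with assms have "h = pair S (pr1 S x y \<cdot> h') (pr2 S x y \<cdot> h')"
    and "h' = pair S (pr1 S x y \<cdot> h') (pr2 S x y \<cdot> h')"
    using prd_universal hom_ob(1)[OF assms(3)] by blast+
  then show ?thesis by simp
qed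

lemma prod_arr_pair:
  "f \<in> hom D a b \<Longrightarrow> g \<in> hom D c d \<Longrightarrow> f \<otimes> g = pair S (f \<cdot> pr1 S a c) (g \<cdot> pr2 S a c)"
  by (simp add: prod_arr_def hom_def)

lemma prod_arr_hom:
  assumes "f \<in> hom D a b" "g \<in> hom D c d"
  shows "f \<otimes> g \<in> hom D (prd S a c) (prd S b d)"
  unfolding prod_arr_pair[OF assms]
  by (meson assms hom_ob pair_hom comp_hom pr1_hom pr2_hom)

lemma pr1_prod_arr:
  assumes "f \<in> hom D a b" "g \<in> hom D c d"
  shows "pr1 S b d \<cdot> (f \<otimes> g) = f \<cdot> pr1 S a c"
  unfolding prod_arr_pair[OF assms]
  by (meson assms hom_ob pr1_pair comp_hom pr1_hom pr2_hom)

lemma pr2_prod_arr: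
  assumes "f \<in> hom D a b" "g \<in> hom D c d"
  shows "pr2 S b d \<cdot> (f \<otimes> g) = g \<cdot> pr2 S a c"
  unfolding prod_arr_pair[OF assms]
  by (meson assms hom_ob pr2_pair comp_hom pr1_hom pr2_hom)

lemma prod_arr_comp:
  assumes f: "f \<in> hom D a b" and g: "g \<in> hom D c d" and f': "f' \<in> hom D b b'" and g': "g' \<in> hom D d d'"
  shows "(f' \<otimes> g') \<cdot> (f \<otimes> g) = (f' \<cdot> f) \<otimes> (g' \<cdot> g)"
proof -
  have ob: "a \<in> Ob D" "b \<in> Ob D" "c \<in> Ob D" "d \<in> Ob D" "b' \<in> Ob D" "d' \<in> Ob D"
    using hom_ob f g f' g' by blast+
  have ff: "f' \<cdot> f \<in> hom D a b'" and gg: "g' \<cdot> g \<in> hom D c d'"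
    using comp_hom f g f' g' by blast+
  note homs = prod_arr_hom[OF f g] prod_arr_hom[OF f' g'] prod_arr_hom[OF ff gg]
    pr1_hom[OF ob(1,3)] pr1_hom[OF ob(2,4)] pr1_hom[OF ob(5,6)]
    pr2_hom[OF ob(1,3)] pr2_hom[OF ob(2,4)] pr2_hom[OF ob(5,6)]
  show ?thesis
  proof (rule prd_hom_eqI[OF ob(5,6)])
    show "pr1 S b' d' \<cdot> (f' \<otimes> g') \<cdot> (f \<otimes> g) = pr1 S b' d' \<cdot> ((f' \<cdot> f) \<otimes> (g' \<cdot> g))"
      using comp_square_paste[OF homs(1,2,4,5,6) f f' pr1_prod_arr[OF f g] pr1_prod_arr[OF f' g']]
      by (simp add: pr1_prod_arr[OF ff gg])
    show "pr2 S b' d' \<cdot> (f' \<otimes> g') \<cdot> (f \<otimes> g) = pr2 S b' d' \<cdot> ((f' \<cdot> f) \<otimes> (g' \<cdot> g))"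
      using comp_square_paste[OF homs(1,2,7,8,9) g g' pr2_prod_arr[OF f g] pr2_prod_arr[OF f' g']]
      by (simp add: pr2_prod_arr[OF ff gg])
  qed (use homs comp_hom in blast)+
qed

lemma prod_arr_split:
  assumes f: "f \<in> hom D a b" and g: "g \<in> hom D c d"
  shows "(Idt D b \<otimes> g) \<cdot> (f \<otimes> Idt D c) = f \<otimes> g"
  using prod_arr_comp[OF f id_hom id_hom g] hom_ob f g comp_id_left[OF f] comp_id_right[OF g]
  by simp

definition swap :: "'p \<Rightarrow> 'p \<Rightarrow> 'b" where
  "swap x y = pair S (pr2 S x y) (pr1 S x y)"

lemma swap_hom: "x \<in> Ob D \<Longrightarrow> y \<in> Ob D \<Longrightarrow> swap x y \<in> hom D (prd S x y) (prd S y x)"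
  by (simp add: swap_def pair_hom pr1_hom pr2_hom)

lemma pr1_swap: "x \<in> Ob D \<Longrightarrow> y \<in> Ob D \<Longrightarrow> pr1 S y x \<cdot> swap x y = pr2 S x y"
  unfolding swap_def by (meson pr1_pair pr1_hom pr2_hom)

lemma pr2_swap: "x \<in> Ob D \<Longrightarrow> y \<in> Ob D \<Longrightarrow> pr2 S y x \<cdot> swap x y = pr1 S x y"
  unfolding swap_def by (meson pr2_pair pr1_hom pr2_hom)

lemma swap_swap:
  assumes "x \<in> Ob D" "y \<in> Ob D"
  shows "swap y x \<cdot> swap x y = Idt D (prd S x y)"
proof -
  note homs = swap_hom[OF assms] swap_hom[OF assms(2,1)] pr1_hom[OF assms] pr2_hom[OF assms]
  show ?thesis
  proof (rule prd_hom_eqI[OF assms])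
    show "swap y x \<cdot> swap x y \<in> hom D (prd S x y) (prd S x y)" by (rule comp_hom[OF homs(1,2)])
    show "Idt D (prd S x y) \<in> hom D (prd S x y) (prd S x y)" by (rule id_hom[OF prd_ob[OF assms]])
    show "pr1 S x y \<cdot> swap y x \<cdot> swap x y = pr1 S x y \<cdot> Idt D (prd S x y)"
      using comp_assoc_rewrite[OF homs(1,2,3) pr1_swap[OF assms(2,1)]]
      by (simp add: assms pr2_swap comp_id_right[OF homs(3)])
    show "pr2 S x y \<cdot> swap y x \<cdot> swap x y = pr2 S x y \<cdot> Idt D (prd S x y)"
      using comp_assoc_rewrite[OF homs(1,2,4) pr2_swap[OF assms(2,1)]]
      by (simp add: assms pr1_swap comp_id_right[OF homs(4)])
  qed
qed

lemma comp_swap_swap: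
  assumes "x \<in> Ob D" "y \<in> Ob D" "h \<in> hom D (prd S y x) z"
  shows "(h \<cdot> swap x y) \<cdot> swap y x = h"
  using comp_assoc[OF swap_hom[OF assms(2,1)] swap_hom[OF assms(1,2)] assms(3)]
  by (simp add: swap_swap assms comp_id_right[OF assms(3)])

lemma swap_natural:
  assumes f: "f \<in> hom D a b" and g: "g \<in> hom D c d"
  shows "swap b d \<cdot> (f \<otimes> g) = (g \<otimes> f) \<cdot> swap a c"
proof -
  have ob: "a \<in> Ob D" "b \<in> Ob D" "c \<in> Ob D" "d \<in> Ob D" using hom_ob f g by blast+
  note homs = prod_arr_hom[OF f g] swap_hom[OF ob(2,4)] prod_arr_hom[OF g f] swap_hom[OF ob(1,3)]
    pr1_hom[OF ob(4,2)] pr2_hom[OF ob(4,2)]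
  show ?thesis
  proof (rule prd_hom_eqI[OF ob(4,2)])
    have "pr1 S d b \<cdot> swap b d \<cdot> (f \<otimes> g) = g \<cdot> pr2 S a c"
      using comp_assoc_rewrite[OF homs(1,2,5) pr1_swap[OF ob(2,4)]] by (simp add: pr2_prod_arr f g)
    moreover have "pr1 S d b \<cdot> (g \<otimes> f) \<cdot> swap a c = g \<cdot> pr2 S a c"
      using comp_assoc_rewrite[OF homs(4,3,5) pr1_prod_arr[OF g f]] comp_assoc[OF homs(4) pr1_hom[OF ob(3,1)] g]
      by (simp add: pr1_swap ob)
    ultimately show "pr1 S d b \<cdot> swap b d \<cdot> (f \<otimes> g) = pr1 S d b \<cdot> (g \<otimes> f) \<cdot> swap a c" by simp
    have "pr2 S d b \<cdot> swap b d \<cdot> (f \<otimes> g) = f \<cdot> pr1 S a c"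
      using comp_assoc_rewrite[OF homs(1,2,6) pr2_swap[OF ob(2,4)]] by (simp add: pr1_prod_arr f g)
    moreover have "pr2 S d b \<cdot> (g \<otimes> f) \<cdot> swap a c = f \<cdot> pr1 S a c"
      using comp_assoc_rewrite[OF homs(4,3,6) pr2_prod_arr[OF g f]] comp_assoc[OF homs(4) pr2_hom[OF ob(3,1)] f]
      by (simp add: pr2_swap ob)
    ultimately show "pr2 S d b \<cdot> swap b d \<cdot> (f \<otimes> g) = pr2 S d b \<cdot> (g \<otimes> f) \<cdot> swap a c" by simp
  qed (rule comp_hom, (rule homs)+)+
qed

lemma exp_universal:
  assumes "y \<in> Ob D" "z \<in> Ob D"
  shows "ex S y z \<in> Ob D \<and> ev S y z \<in> hom D (prd S (ex S y z) y) z \<and>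
        (\<forall>x\<in>Ob D. \<forall>h\<in>hom D (prd S x y) z.
           lam S x y z h \<in> hom D x (ex S y z) \<and> ev S y z \<cdot> (lam S x y z h \<otimes> Idt D y) = h \<and>
           (\<forall>k\<in>hom D x (ex S y z). ev S y z \<cdot> (k \<otimes> Idt D y) = h \<longrightarrow> k = lam S x y z h))"
  using ccc assms by (simp add: is_ccc_def)

lemma ex_ob: "y \<in> Ob D \<Longrightarrow> z \<in> Ob D \<Longrightarrow> ex S y z \<in> Ob D"
  using exp_universal by blast

lemma ev_hom: "y \<in> Ob D \<Longrightarrow> z \<in> Ob D \<Longrightarrow> ev S y z \<in> hom D (prd S (ex S y z) y) z"
  using exp_universal by blast

lemma lam_hom:
  "x \<in> Ob D \<Longrightarrow> y \<in> Ob D \<Longrightarrow> h \<in> hom D (prd S x y) z \<Longrightarrow> lam S x y z h \<in> hom D x (ex S y z)"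
  using exp_universal hom_ob by blast

lemma ev_lam:
  "x \<in> Ob D \<Longrightarrow> y \<in> Ob D \<Longrightarrow> h \<in> hom D (prd S x y) z \<Longrightarrow> ev S y z \<cdot> (lam S x y z h \<otimes> Idt D y) = h"
  using exp_universal hom_ob by blast

lemma lam_unique:
  "y \<in> Ob D \<Longrightarrow> k \<in> hom D x (ex S y z) \<Longrightarrow> h \<in> hom D (prd S x y) z \<Longrightarrow>
   ev S y z \<cdot> (k \<otimes> Idt D y) = h \<Longrightarrow> k = lam S x y z h"
  using exp_universal hom_ob by blast

lemma exp_arr_lam:
  assumes u: "u \<in> hom D y' y" and v: "v \<in> hom D z z'"
  shows "exp_arr D S u v = lam S (ex S y z) y' z' (v \<cdot> ev S y z \<cdot> (Idt D (ex S y z) \<otimes> u))"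
    and "v \<cdot> ev S y z \<cdot> (Idt D (ex S y z) \<otimes> u) \<in> hom D (prd S (ex S y z) y') z'"
proof -
  show "exp_arr D S u v = lam S (ex S y z) y' z' (v \<cdot> ev S y z \<cdot> (Idt D (ex S y z) \<otimes> u))"
    using u v by (simp add: exp_arr_def hom_def)
  have ob: "y \<in> Ob D" "y' \<in> Ob D" "z \<in> Ob D" "z' \<in> Ob D" using hom_ob u v by blast+
  show "v \<cdot> ev S y z \<cdot> (Idt D (ex S y z) \<otimes> u) \<in> hom D (prd S (ex S y z) y') z'"
    by (meson comp_hom prod_arr_hom id_hom ex_ob ev_hom ob u v)
qed

lemma exp_arr_hom:
  assumes "u \<in> hom D y' y" "v \<in> hom D z z'"
  shows "exp_arr D S u v \<in> hom D (ex S y z) (ex S y' z')"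
  using exp_arr_lam[OF assms] lam_hom ex_ob hom_ob assms by metis

lemma ev_exp_arr:
  assumes "u \<in> hom D y' y" "v \<in> hom D z z'"
  shows "ev S y' z' \<cdot> (exp_arr D S u v \<otimes> Idt D y') = v \<cdot> ev S y z \<cdot> (Idt D (ex S y z) \<otimes> u)"
  using exp_arr_lam[OF assms] ev_lam ex_ob hom_ob assms by metis

lemma ev_comp_exp_arr:
  assumes u: "u \<in> hom D x' x" and v: "v \<in> hom D z z'" and m: "m \<in> hom D w (ex S x z)"
  shows "ev S x' z' \<cdot> ((exp_arr D S u v \<cdot> m) \<otimes> Idt D x') = v \<cdot> ev S x z \<cdot> (m \<otimes> u)"
proof -
  have ob: "x \<in> Ob D" "x' \<in> Ob D" "z \<in> Ob D" "z' \<in> Ob D" using hom_ob u v by blast+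
  have E: "exp_arr D S u v \<in> hom D (ex S x z) (ex S x' z')" by (rule exp_arr_hom[OF u v])
  note ids = id_hom[OF ob(2)] id_hom[OF ex_ob[OF ob(1,3)]]
  note homs = prod_arr_hom[OF m ids(1)] prod_arr_hom[OF E ids(1)] prod_arr_hom[OF ids(2) u]
    ev_hom[OF ob(1,3)] ev_hom[OF ob(2,4)]
  have "ev S x' z' \<cdot> ((exp_arr D S u v \<cdot> m) \<otimes> Idt D x')
      = ev S x' z' \<cdot> (exp_arr D S u v \<otimes> Idt D x') \<cdot> (m \<otimes> Idt D x')"
    using prod_arr_comp[OF m ids(1) E ids(1)] comp_id_left[OF ids(1)] by simp
  also have "\<dots> = (v \<cdot> ev S x z \<cdot> (Idt D (ex S x z) \<otimes> u)) \<cdot> (m \<otimes> Idt D x')"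
    by (rule comp_assoc_rewrite[OF homs(1,2,5) ev_exp_arr[OF u v]])
  also have "\<dots> = v \<cdot> ev S x z \<cdot> (m \<otimes> u)"
    using comp_assoc[OF homs(1) comp_hom[OF homs(3,4)] v] comp_assoc[OF homs(1,3,4)] prod_arr_split[OF m u]
    by simp
  finally show ?thesis .
qed

definition curry_fst :: "'p \<Rightarrow> 'p \<Rightarrow> 'p \<Rightarrow> 'b \<Rightarrow> 'b" where
  "curry_fst x y z h = lam S y x z (h \<cdot> swap y x)"

definition uncurry_fst :: "'p \<Rightarrow> 'p \<Rightarrow> 'p \<Rightarrow> 'b \<Rightarrow> 'b" where
  "uncurry_fst x y z k = (ev S x z \<cdot> (k \<otimes> Idt D x)) \<cdot> swap x y"

lemma curry_fst_hom:
  assumes "x \<in> Ob D" "y \<in> Ob D" "h \<in> hom D (prd S x y) z"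
  shows "curry_fst x y z h \<in> hom D y (ex S x z)"
  unfolding curry_fst_def using assms by (meson lam_hom comp_hom swap_hom)

lemma uncurry_fst_hom:
  assumes "x \<in> Ob D" "z \<in> Ob D" "k \<in> hom D y (ex S x z)"
  shows "uncurry_fst x y z k \<in> hom D (prd S x y) z"
  unfolding uncurry_fst_def using assms by (meson hom_ob comp_hom swap_hom ev_hom prod_arr_hom id_hom)

lemma uncurry_curry_fst:
  assumes "x \<in> Ob D" "y \<in> Ob D" "h \<in> hom D (prd S x y) z"
  shows "uncurry_fst x y z (curry_fst x y z h) = h"
proof -
  have "h \<cdot> swap y x \<in> hom D (prd S y x) z" by (meson assms comp_hom swap_hom)
  then show ?thesis
    unfolding uncurry_fst_def curry_fst_def by (simp add: ev_lam comp_swap_swap[OF assms(2,1,3)] assms)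
qed

lemma curry_uncurry_fst:
  assumes "x \<in> Ob D" "z \<in> Ob D" "k \<in> hom D y (ex S x z)"
  shows "curry_fst x y z (uncurry_fst x y z k) = k"
proof -
  have y: "y \<in> Ob D" using hom_ob assms(3) by blast
  have "ev S x z \<cdot> (k \<otimes> Idt D x) \<in> hom D (prd S y x) z"
    by (meson assms comp_hom ev_hom prod_arr_hom id_hom)
  then show ?thesis
    unfolding uncurry_fst_def curry_fst_def using lam_unique assms
    by (simp add: comp_swap_swap y)
qed

lemma curry_fst_inject:
  assumes "x \<in> Ob D" "y \<in> Ob D" "h \<in> hom D (prd S x y) z" "h' \<in> hom D (prd S x y) z"
  shows "curry_fst x y z h = curry_fst x y z h' \<longleftrightarrow> h = h'"
  using uncurry_curry_fst assms by metis

lemma uncurry_fst_natural: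
  assumes u: "u \<in> hom D x' x" and g: "g \<in> hom D y' y" and v: "v \<in> hom D z z'"
    and k: "k \<in> hom D y (ex S x z)"
  shows "uncurry_fst x' y' z' ((exp_arr D S u v \<cdot> k) \<cdot> g) = (v \<cdot> uncurry_fst x y z k) \<cdot> (u \<otimes> g)"
proof -
  have ob: "x \<in> Ob D" "x' \<in> Ob D" "y \<in> Ob D" "y' \<in> Ob D" "z \<in> Ob D"
    using hom_ob u g v k by blast+
  define n where "n = ev S x z \<cdot> (k \<otimes> Idt D x)"
  have kg: "k \<cdot> g \<in> hom D y' (ex S x z)" by (rule comp_hom[OF g k])
  have n: "n \<in> hom D (prd S y x) z"
    unfolding n_def by (meson comp_hom ev_hom prod_arr_hom id_hom ob k)
  note homs = ev_hom[OF ob(1,5)] swap_hom[OF ob(1,3)] swap_hom[OF ob(2,4)]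
    prod_arr_hom[OF kg u] prod_arr_hom[OF g u] prod_arr_hom[OF u g] prod_arr_hom[OF k id_hom[OF ob(1)]]
  have "uncurry_fst x' y' z' ((exp_arr D S u v \<cdot> k) \<cdot> g) = v \<cdot> (ev S x z \<cdot> ((k \<cdot> g) \<otimes> u)) \<cdot> swap x' y'"
    unfolding uncurry_fst_def
    using comp_assoc[OF g k exp_arr_hom[OF u v]] ev_comp_exp_arr[OF u v kg]
      comp_assoc[OF homs(3) comp_hom[OF homs(4,1)] v]
    by simp
  moreover have "n \<cdot> (g \<otimes> u) = ev S x z \<cdot> ((k \<cdot> g) \<otimes> u)"
    unfolding n_def using comp_assoc[OF homs(5,7,1)] prod_arr_comp[OF g u k id_hom[OF ob(1)]] comp_id_left[OF u]
    by simp
  moreover have "(v \<cdot> n \<cdot> swap x y) \<cdot> (u \<otimes> g) = v \<cdot> (n \<cdot> (g \<otimes> u)) \<cdot> swap x' y'"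
    using comp_assoc[OF homs(6) comp_hom[OF homs(2) n] v] comp_assoc[OF homs(6,2) n]
      swap_natural[OF u g] comp_assoc[OF homs(3,5) n]
    by simp
  ultimately show ?thesis
    unfolding uncurry_fst_def n_def by simp
qed

lemma curry_fst_natural:
  assumes u: "u \<in> hom D x' x" and g: "g \<in> hom D y' y" and v: "v \<in> hom D z z'"
    and h: "h \<in> hom D (prd S x y) z"
  shows "curry_fst x' y' z' ((v \<cdot> h) \<cdot> (u \<otimes> g)) = (exp_arr D S u v \<cdot> curry_fst x y z h) \<cdot> g"
proof -
  have ob: "x \<in> Ob D" "x' \<in> Ob D" "y \<in> Ob D" "y' \<in> Ob D" "z \<in> Ob D" "z' \<in> Ob D"
    using hom_ob u g v h by blast+
  have "(exp_arr D S u v \<cdot> curry_fst x y z h) \<cdot> g \<in> hom D y' (ex S x' z')"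
    by (meson comp_hom curry_fst_hom exp_arr_hom ob u g v h)
  then show ?thesis
    using curry_uncurry_fst[OF ob(2,6)] uncurry_fst_natural[OF u g v curry_fst_hom[OF ob(1,3) h]]
    by (metis uncurry_curry_fst[OF ob(1,3) h])
qed

lemma curry_fst_wedge_iff:
  assumes h1: "h1 \<in> hom D (prd S x1 y1) z1" and h2: "h2 \<in> hom D (prd S x2 y2) z2"
    and u1: "u1 \<in> hom D x x1" and g1: "g1 \<in> hom D y y1" and v1: "v1 \<in> hom D z1 z"
    and u2: "u2 \<in> hom D x x2" and g2: "g2 \<in> hom D y y2" and v2: "v2 \<in> hom D z2 z"
  shows "(v1 \<cdot> h1) \<cdot> (u1 \<otimes> g1) = (v2 \<cdot> h2) \<cdot> (u2 \<otimes> g2) \<longleftrightarrow>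
    (exp_arr D S u1 v1 \<cdot> curry_fst x1 y1 z1 h1) \<cdot> g1 = (exp_arr D S u2 v2 \<cdot> curry_fst x2 y2 z2 h2) \<cdot> g2"
proof -
  have "x \<in> Ob D" "y \<in> Ob D" using hom_ob u1 g1 by blast+
  moreover have "(v1 \<cdot> h1) \<cdot> (u1 \<otimes> g1) \<in> hom D (prd S x y) z"
    and "(v2 \<cdot> h2) \<cdot> (u2 \<otimes> g2) \<in> hom D (prd S x y) z"
    by (meson comp_hom prod_arr_hom assms)+
  ultimately show ?thesis
    by (simp add: curry_fst_inject flip: curry_fst_natural[OF u1 g1 v1 h1] curry_fst_natural[OF u2 g2 v2 h2])
qed

end

lemma arr_hom: "f \<in> Ar C \<Longrightarrow> f \<in> hom C (Dom C f) (Cod C f)"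
  by (simp add: hom_def)

lemma category_arr_obs:
  assumes "is_category C" "f \<in> Ar C" shows "Dom C f \<in> Ob C" "Cod C f \<in> Ob C"
  using assms by (auto simp: is_category_def)

lemma category_id_hom: "is_category C \<Longrightarrow> x \<in> Ob C \<Longrightarrow> Idt C x \<in> hom C x x"
  by (simp add: is_category_def)

lemma bifunctor_ob: "is_bifunctor C D B \<Longrightarrow> x' \<in> Ob C \<Longrightarrow> x \<in> Ob C \<Longrightarrow> BFo B x' x \<in> Ob D"
  by (simp add: is_bifunctor_def)

lemma bifunctor_hom:
  "is_bifunctor C D B \<Longrightarrow> f \<in> hom C a' b' \<Longrightarrow> g \<in> hom C a b \<Longrightarrow> BFa B f g \<in> hom D (BFo B b' a) (BFo B a' b)"
  by (auto simp: is_bifunctor_def hom_def)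

locale ccc_bifunctors = ccc D S
  for D :: "('p,'b) category" and S :: "('p,'b) ccc_structure" +
  fixes C :: "('o,'a) category" and F G H :: "('o,'a,'p,'b) bifunctor"
  assumes category_C: "is_category C"
    and F: "is_bifunctor C D F" and G: "is_bifunctor C D G" and H: "is_bifunctor C D H"
begin

definition curry_dinat :: "('o \<Rightarrow> 'b) \<Rightarrow> 'o \<Rightarrow> 'b" where
  "curry_dinat \<alpha> = (\<lambda>x\<in>Ob C. curry_fst (BFo F x x) (BFo G x x) (BFo H x x) (\<alpha> x))"

definition uncurry_dinat :: "('o \<Rightarrow> 'b) \<Rightarrow> 'o \<Rightarrow> 'b" where
  "uncurry_dinat \<beta> = (\<lambda>x\<in>Ob C. uncurry_fst (BFo F x x) (BFo G x x) (BFo H x x) (\<beta> x))"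

lemma diagonal_obs:
  assumes "x \<in> Ob C" shows "BFo F x x \<in> Ob D" "BFo G x x \<in> Ob D" "BFo H x x \<in> Ob D"
  using bifunctor_ob[OF F assms assms] bifunctor_ob[OF G assms assms] bifunctor_ob[OF H assms assms]
  by simp_all

lemma dinat_prod_iff_curry_dinat:
  assumes ext: "\<alpha> \<in> extensional (Ob C)"
    and typed: "\<forall>x\<in>Ob C. \<alpha> x \<in> hom D (prd S (BFo F x x) (BFo G x x)) (BFo H x x)"
  shows "\<alpha> \<in> dinat C D (prod_bifun D S F G) H \<longleftrightarrow> curry_dinat \<alpha> \<in> dinat C D G (exp_bifun D S F H)"
proof -
  have wedge:
    "(BFa H f (Idt C b) \<cdot> \<alpha> b) \<cdot> (BFa F (Idt C b) f \<otimes> BFa G (Idt C b) f)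
       = (BFa H (Idt C a) f \<cdot> \<alpha> a) \<cdot> (BFa F f (Idt C a) \<otimes> BFa G f (Idt C a))
     \<longleftrightarrow> (exp_arr D S (BFa F (Idt C b) f) (BFa H f (Idt C b)) \<cdot> curry_dinat \<alpha> b) \<cdot> BFa G (Idt C b) f
       = (exp_arr D S (BFa F f (Idt C a)) (BFa H (Idt C a) f) \<cdot> curry_dinat \<alpha> a) \<cdot> BFa G f (Idt C a)"
    if f: "f \<in> hom C a b" and a: "a \<in> Ob C" and b: "b \<in> Ob C" for f a b
  proof -
    note ida = category_id_hom[OF category_C a] and idb = category_id_hom[OF category_C b]
    show ?thesis
      using curry_fst_wedge_iff[OF typed[rule_format, OF b] typed[rule_format, OF a]
          bifunctor_hom[OF F idb f] bifunctor_hom[OF G idb f] bifunctor_hom[OF H f idb]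
          bifunctor_hom[OF F f ida] bifunctor_hom[OF G f ida] bifunctor_hom[OF H ida f]] a b
      by (simp add: curry_dinat_def)
  qed
  have "curry_dinat \<alpha> x \<in> hom D (BFo G x x) (ex S (BFo F x x) (BFo H x x))" if "x \<in> Ob C" for x
    using curry_fst_hom diagonal_obs typed that by (simp add: curry_dinat_def)
  then show ?thesis
    using ext typed
    by (auto simp: dinat_def prod_bifun_def exp_bifun_def extensional_def curry_dinat_def
        wedge[OF arr_hom] category_arr_obs[OF category_C])
qed

lemma dinat_prod_hom:
  "\<alpha> \<in> dinat C D (prod_bifun D S F G) H \<Longrightarrow> x \<in> Ob C \<Longrightarrow>
   \<alpha> x \<in> hom D (prd S (BFo F x x) (BFo G x x)) (BFo H x x)"
  by (simp add: dinat_def prod_bifun_def)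

lemma dinat_exp_hom:
  "\<beta> \<in> dinat C D G (exp_bifun D S F H) \<Longrightarrow> x \<in> Ob C \<Longrightarrow>
   \<beta> x \<in> hom D (BFo G x x) (ex S (BFo F x x) (BFo H x x))"
  by (simp add: dinat_def exp_bifun_def)

lemma dinat_extensional: "\<alpha> \<in> dinat C D P Q \<Longrightarrow> \<alpha> \<in> extensional (Ob C)"
  by (simp add: dinat_def extensional_def)

lemma uncurry_curry_dinat:
  assumes "\<alpha> \<in> dinat C D (prod_bifun D S F G) H"
  shows "uncurry_dinat (curry_dinat \<alpha>) = \<alpha>"
proof (rule extensionalityI[OF _ dinat_extensional[OF assms]])
  show "uncurry_dinat (curry_dinat \<alpha>) x = \<alpha> x" if "x \<in> Ob C" for x
    using that uncurry_curry_fst[OF diagonal_obs(1,2)[OF that] dinat_prod_hom[OF assms that]]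
    by (simp add: uncurry_dinat_def curry_dinat_def)
qed (simp add: uncurry_dinat_def)

lemma curry_uncurry_dinat:
  assumes "\<beta> \<in> dinat C D G (exp_bifun D S F H)"
  shows "curry_dinat (uncurry_dinat \<beta>) = \<beta>"
proof (rule extensionalityI[OF _ dinat_extensional[OF assms]])
  show "curry_dinat (uncurry_dinat \<beta>) x = \<beta> x" if "x \<in> Ob C" for x
    using that curry_uncurry_fst[OF diagonal_obs(1,3)[OF that] dinat_exp_hom[OF assms that]]
    by (simp add: uncurry_dinat_def curry_dinat_def)
qed (simp add: curry_dinat_def)

lemma curry_dinat_in_dinat:
  "\<alpha> \<in> dinat C D (prod_bifun D S F G) H \<Longrightarrow> curry_dinat \<alpha> \<in> dinat C D G (exp_bifun D S F H)"
  using dinat_prod_iff_curry_dinat dinat_extensional dinat_prod_hom by blast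

lemma uncurry_dinat_in_dinat:
  assumes "\<beta> \<in> dinat C D G (exp_bifun D S F H)"
  shows "uncurry_dinat \<beta> \<in> dinat C D (prod_bifun D S F G) H"
proof -
  have "\<forall>x\<in>Ob C. uncurry_dinat \<beta> x \<in> hom D (prd S (BFo F x x) (BFo G x x)) (BFo H x x)"
    using uncurry_fst_hom diagonal_obs dinat_exp_hom[OF assms] by (simp add: uncurry_dinat_def)
  then show ?thesis
    using dinat_prod_iff_curry_dinat curry_uncurry_dinat[OF assms] assms
    by (simp add: uncurry_dinat_def)
qed

end

theorem mainTheorem9:
  fixes C :: "('o,'a) category" and D :: "('p,'b) category" and S :: "('p,'b) ccc_structure"
    and F G H :: "('o,'a,'p,'b) bifunctor"
  assumes "is_category C" and "is_ccc D S"
    and "is_bifunctor C D F" and "is_bifunctor C D G" and "is_bifunctor C D H"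
  shows "\<exists>\<phi>. bij_betw \<phi> (dinat C D (prod_bifun D S F G) H) (dinat C D G (exp_bifun D S F H))"
proof -
  interpret ccc_bifunctors D S C F G H
    using assms by (simp add: ccc_bifunctors_def ccc_bifunctors_axioms_def ccc_def)
  have "bij_betw curry_dinat (dinat C D (prod_bifun D S F G) H) (dinat C D G (exp_bifun D S F H))"
    by (rule bij_betw_byWitness[where f' = uncurry_dinat])
      (auto simp: uncurry_curry_dinat curry_uncurry_dinat curry_dinat_in_dinat uncurry_dinat_in_dinat)
  then show ?thesis by blast
qed

end
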